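(* Every scalable NCG is asymptotically well designed, i.e. for every sequence $(d^{(n)})$ of user volume vectors with $T(d^{(n)})\to\infty$ one has $\mathrm{PoA}(d^{(n)})\to 1$.
   Context: A non-atomic congestion game (NCG) consists of: a finite set $A$ of resources; an integer $K\ge 1$ of user groups; pairwise disjoint finite nonempty sets $\mathcal S_1,\dots,\mathcal S_K$ of strategies, $\mathcal S=\bigcup_{k}\mathcal S_k$; constants $r(a,s)\ge 0$ with $\sum_{a} r(a,s)>0$ for every $s$ and $\sum_{s} r(a,s)>0$ for every $a$; continuous nondecreasing consumption price functions $\tau_a:[0,\infty)\to[0,\infty)$; and a user volume vector $d=(d_k)_{k=1}^K\in\mathbb R_{\ge 0}^K$ with total volume $T(d)=\sum_k d_k$. The game structure is fixed while $d$ varies (over all of $\mathbb R^K_{\ge0}$ unless a set of admissible user volume vectors is specified, in which case every quantification over user volume vectors ranges over that set). A feasible profile for $d$ is $f=(f_s)_{s\in\mathcal S}$ with $f_s\ge 0$ and $\sum_{s\in\mathcal S_k} f_s=d_k$ for all $k$; loads $f_a=\sum_{s} r(a,s)f_s$, strategy prices $\tau_s(f)=\sum_{a} r(a,s)\tau_a(f_a)$, social cost $C(f)=\sum_a f_a\tau_a(f_a)=\sum_s f_s\tau_s(f)$. $f$ is an NE-profile if for every $k$ and all $s,s'\in\mathcal S_k$ with $f_s>0$, $\tau_s(f)\le\tau_{s'}(f)$; an SO-profile if it minimizes $C$. All NE-profiles have the same cost, as do all SO-profiles; $\mathrm{PoA}(d)=C(\tilde f)/C(f^* )$ for an NE-profile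 $\tilde f$ and SO-profile $f^*$ for $d$. The game is asymptotically well designed (in AWDG) if $\mathrm{PoA}(d^{(n)})\to1$ whenever $T(d^{(n)})\to\infty$. Normalization: for $d$ with $T(d)>0$, put $\lambda_k=d_k/T(d)$ and $\lambda=(\lambda_k)_k$. For each resource $a$ let $I_a=\{\sum_s r(a,s)\xi_s:\ \xi\in\mathbb R^{\mathcal S}_{\ge0},\ \sum_s\xi_s\le 1\}=[0,\max_s r(a,s)]$. Scalability: the NCG is scalable if for every sequence $(d^{(n)})$ of user volume vectors with $T(d^{(n)})\to\infty$ there exist a subsequence $(n_i)$ and positive reals $(g_i)$ such that: (S0) $\lambda^{(n_i)}\to\lambda$ for some vector $\lambda$; (S1) there are limit price functions $l_a$ on $I_a$, each either a nondecreasing function with values in $[0,\infty)$, or $l_a\equiv+\infty$ on $I_a\cap(0,\infty)$; (S2) for all $a\in A$ and $x\in I_a$, $\tau_a(T(d^{(n_i)})x)/g_i\to l_a(x)$ as $i\to\infty$, and if $l_a(x)<\infty$ then $l_a$ is continuous at $x$; (S3) every group $k$ is either negligible, meaning that for every choice of feasible profiles $f^{(i)}$ for $d^{(n_i)}$, $\frac{1}{T(d^{(n_i)})g_i}\sum_{s\in\mathcal S_k} f^{(i)}_s\tau_s(f^{(i)})\to 0$, or has a tight strategy, i.e. some $s\in\mathcal S_k$ with $l_a$ real-valued for every $a$ with $r(a,s)>0$; (S4) in the limit game $\Gamma_\infty$ — the NCG with resources $A^{tight}$ (those $a$ with $r(a,s)>0$ for some tight $s$), strategy sets $\mathcal S_k^{tight}$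 (tight strategies of $\mathcal S_k$, only groups with $\mathcal S_k^{tight}\neq\emptyset$ included), the same $r(a,s)$, prices $l_a$, and user volume vector $\lambda$ — NE-profiles and SO-profiles have equal cost; (S5) the cost of NE-profiles of $\Gamma_\infty$ is positive. *)

theory Defs
  imports "HOL-Analysis.Analysis"
begin

text \<open>Resources have type 'a, strategies type 's.
  A game is given by a resource set A, a set G of group indices, strategy sets Sg k (k in G),
  consumption constants r, price functions p, and a user volume vector d (indexed by nat).\<close>

definition strats :: "nat set \<Rightarrow> (nat \<Rightarrow> 's set) \<Rightarrow> 's set" where
  "strats G Sg = (\<Union>k\<in>G. Sg k)"

definition load :: "'s set \<Rightarrow> ('a \<Rightarrow> 's \<Rightarrow> real) \<Rightarrow> ('s \<Rightarrow> real) \<Rightarrow> 'a \<Rightarrow> real" where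
  "load S r f a = (\<Sum>s\<in>S. r a s * f s)"

definition sprice :: "'a set \<Rightarrow> 's set \<Rightarrow> ('a \<Rightarrow> 's \<Rightarrow> real) \<Rightarrow> ('a \<Rightarrow> real \<Rightarrow> real)
    \<Rightarrow> ('s \<Rightarrow> real) \<Rightarrow> 's \<Rightarrow> real" where
  "sprice A S r p f s = (\<Sum>a\<in>A. r a s * p a (load S r f a))"

definition cost :: "'a set \<Rightarrow> 's set \<Rightarrow> ('a \<Rightarrow> 's \<Rightarrow> real) \<Rightarrow> ('a \<Rightarrow> real \<Rightarrow> real)
    \<Rightarrow> ('s \<Rightarrow> real) \<Rightarrow> real" where
  "cost A S r p f = (\<Sum>a\<in>A. load S r f a * p a (load S r f a))"

definition feasible :: "nat set \<Rightarrow> (nat \<Rightarrow> 's set) \<Rightarrow> (nat \<Rightarrow> real) \<Rightarrow> ('s \<Rightarrow> real) \<Rightarrow> bool" where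
  "feasible G Sg d f \<longleftrightarrow> (\<forall>s\<in>strats G Sg. 0 \<le> f s) \<and> (\<forall>k\<in>G. sum f (Sg k) = d k)"

definition is_NE :: "'a set \<Rightarrow> nat set \<Rightarrow> (nat \<Rightarrow> 's set) \<Rightarrow> ('a \<Rightarrow> 's \<Rightarrow> real)
    \<Rightarrow> ('a \<Rightarrow> real \<Rightarrow> real) \<Rightarrow> (nat \<Rightarrow> real) \<Rightarrow> ('s \<Rightarrow> real) \<Rightarrow> bool" where
  "is_NE A G Sg r p d f \<longleftrightarrow> feasible G Sg d f \<and>
     (\<forall>k\<in>G. \<forall>s\<in>Sg k. \<forall>s'\<in>Sg k. f s > 0 \<longrightarrow>
        sprice A (strats G Sg) r p f s \<le> sprice A (strats G Sg) r p f s')"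

definition is_SO :: "'a set \<Rightarrow> nat set \<Rightarrow> (nat \<Rightarrow> 's set) \<Rightarrow> ('a \<Rightarrow> 's \<Rightarrow> real)
    \<Rightarrow> ('a \<Rightarrow> real \<Rightarrow> real) \<Rightarrow> (nat \<Rightarrow> real) \<Rightarrow> ('s \<Rightarrow> real) \<Rightarrow> bool" where
  "is_SO A G Sg r p d f \<longleftrightarrow> feasible G Sg d f \<and>
     (\<forall>h. feasible G Sg d h \<longrightarrow> cost A (strats G Sg) r p f \<le> cost A (strats G Sg) r p h)"

definition ncg :: "'a set \<Rightarrow> nat \<Rightarrow> (nat \<Rightarrow> 's set) \<Rightarrow> ('a \<Rightarrow> 's \<Rightarrow> real)
    \<Rightarrow> ('a \<Rightarrow> real \<Rightarrow> real) \<Rightarrow> bool" where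
  "ncg A K Sg r \<tau> \<longleftrightarrow>
     finite A \<and> K \<ge> 1 \<and>
     (\<forall>k<K. finite (Sg k) \<and> Sg k \<noteq> {}) \<and>
     (\<forall>k<K. \<forall>k'<K. k \<noteq> k' \<longrightarrow> Sg k \<inter> Sg k' = {}) \<and>
     (\<forall>a\<in>A. \<forall>s\<in>strats {..<K} Sg. 0 \<le> r a s) \<and>
     (\<forall>s\<in>strats {..<K} Sg. (\<Sum>a\<in>A. r a s) > 0) \<and>
     (\<forall>a\<in>A. (\<Sum>s\<in>strats {..<K} Sg. r a s) > 0) \<and>
     (\<forall>a\<in>A. continuous_on {0..} (\<tau> a) \<and> mono_on {0..} (\<tau> a) \<and> (\<forall>x\<ge>0. 0 \<le> \<tau> a x))"

definition total :: "nat \<Rightarrow> (nat \<Rightarrow> real) \<Rightarrow> real" where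
  "total K d = (\<Sum>k<K. d k)"

definition awdg :: "'a set \<Rightarrow> nat \<Rightarrow> (nat \<Rightarrow> 's set) \<Rightarrow> ('a \<Rightarrow> 's \<Rightarrow> real)
    \<Rightarrow> ('a \<Rightarrow> real \<Rightarrow> real) \<Rightarrow> (nat \<Rightarrow> real) set \<Rightarrow> bool" where
  "awdg A K Sg r \<tau> D \<longleftrightarrow>
     (\<forall>dn :: nat \<Rightarrow> nat \<Rightarrow> real. (\<forall>n. dn n \<in> D) \<and> filterlim (\<lambda>n. total K (dn n)) at_top sequentially \<longrightarrow>
       (\<forall>fne fso. (\<forall>n. is_NE A {..<K} Sg r \<tau> (dn n) (fne n)) \<and> (\<forall>n. is_SO A {..<K} Sg r \<tau> (dn n) (fso n)) \<longrightarrow>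
          (\<lambda>n. cost A (strats {..<K} Sg) r \<tau> (fne n) / cost A (strats {..<K} Sg) r \<tau> (fso n))
             \<longlonglongrightarrow> 1))"

definition Ires :: "'s set \<Rightarrow> ('a \<Rightarrow> 's \<Rightarrow> real) \<Rightarrow> 'a \<Rightarrow> real set" where
  "Ires S r a = {0 .. Max ((\<lambda>s. r a s) ` S)}"

definition real_valued_on :: "real set \<Rightarrow> (real \<Rightarrow> ereal) \<Rightarrow> bool" where
  "real_valued_on I la \<longleftrightarrow> (\<forall>x\<in>I. \<bar>la x\<bar> \<noteq> \<infinity>)"

text \<open>(S1) together with the continuity part of (S2): a limit price function on I is either a
  real-valued, nonnegative, nondecreasing function, continuous on I, or identically +infinity on
  I \<inter> (0,\<infinity>).\<close>
definition limit_price_fun :: "real set \<Rightarrow> (real \<Rightarrow> ereal) \<Rightarrow> bool" where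
  "limit_price_fun I la \<longleftrightarrow>
     (real_valued_on I la \<and> (\<forall>x\<in>I. 0 \<le> la x) \<and> mono_on I la \<and>
        continuous_on I (\<lambda>x. real_of_ereal (la x)))
     \<or> (\<forall>x\<in>I. x > 0 \<longrightarrow> la x = \<infinity>)"

definition tight :: "'a set \<Rightarrow> 's set \<Rightarrow> ('a \<Rightarrow> 's \<Rightarrow> real) \<Rightarrow> ('a \<Rightarrow> real \<Rightarrow> ereal) \<Rightarrow> 's \<Rightarrow> bool" where
  "tight A S r l s \<longleftrightarrow> (\<forall>a\<in>A. r a s > 0 \<longrightarrow> real_valued_on (Ires S r a) (l a))"

definition tight_res :: "'a set \<Rightarrow> 's set \<Rightarrow> ('a \<Rightarrow> 's \<Rightarrow> real) \<Rightarrow> ('a \<Rightarrow> real \<Rightarrow> ereal) \<Rightarrow> 'a set" where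
  "tight_res A S r l = {a\<in>A. \<exists>s\<in>S. tight A S r l s \<and> r a s > 0}"

definition tight_strats :: "'a set \<Rightarrow> 's set \<Rightarrow> ('a \<Rightarrow> 's \<Rightarrow> real) \<Rightarrow> ('a \<Rightarrow> real \<Rightarrow> ereal)
    \<Rightarrow> (nat \<Rightarrow> 's set) \<Rightarrow> nat \<Rightarrow> 's set" where
  "tight_strats A S r l Sg k = {s\<in>Sg k. tight A S r l s}"

definition tight_groups :: "'a set \<Rightarrow> 's set \<Rightarrow> ('a \<Rightarrow> 's \<Rightarrow> real) \<Rightarrow> ('a \<Rightarrow> real \<Rightarrow> ereal)
    \<Rightarrow> (nat \<Rightarrow> 's set) \<Rightarrow> nat \<Rightarrow> nat set" where
  "tight_groups A S r l Sg K = {k. k < K \<and> tight_strats A S r l Sg k \<noteq> {}}"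

definition scalable :: "'a set \<Rightarrow> nat \<Rightarrow> (nat \<Rightarrow> 's set) \<Rightarrow> ('a \<Rightarrow> 's \<Rightarrow> real)
    \<Rightarrow> ('a \<Rightarrow> real \<Rightarrow> real) \<Rightarrow> (nat \<Rightarrow> real) set \<Rightarrow> bool" where
  "scalable A K Sg r \<tau> D \<longleftrightarrow>
     (\<forall>dn :: nat \<Rightarrow> nat \<Rightarrow> real. (\<forall>n. dn n \<in> D) \<and> filterlim (\<lambda>n. total K (dn n)) at_top sequentially \<longrightarrow>
       (\<exists>(ns :: nat \<Rightarrow> nat) (g :: nat \<Rightarrow> real) (lam :: nat \<Rightarrow> real) (l :: 'a \<Rightarrow> real \<Rightarrow> ereal).
          let S = strats {..<K} Sg;
              T = (\<lambda>i. total K (dn (ns i)));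
              At = tight_res A S r l;
              St = tight_strats A S r l Sg;
              Gt = tight_groups A S r l Sg K;
              lp = (\<lambda>a x. real_of_ereal (l a x))
          in strict_mono ns \<and> (\<forall>i. 0 < g i) \<and>
             \<comment> \<open>(S0)\<close>
             (\<forall>k<K. (\<lambda>i. dn (ns i) k / T i) \<longlonglongrightarrow> lam k) \<and>
             \<comment> \<open>(S1) and continuity part of (S2)\<close>
             (\<forall>a\<in>A. limit_price_fun (Ires S r a) (l a)) \<and>
             \<comment> \<open>(S2)\<close>
             (\<forall>a\<in>A. \<forall>x\<in>Ires S r a. (\<lambda>i. ereal (\<tau> a (T i * x) / g i)) \<longlonglongrightarrow> l a x) \<and>
             \<comment> \<open>(S3)\<close>
             (\<forall>k<K.
                (\<forall>F :: nat \<Rightarrow> 's \<Rightarrow> real. (\<forall>i. feasible {..<K} Sg (dn (ns i)) (F i)) \<longrightarrow>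
                   (\<lambda>i. (\<Sum>s\<in>Sg k. F i s * sprice A S r \<tau> (F i) s) / (T i * g i)) \<longlonglongrightarrow> 0)
                \<or> (\<exists>s\<in>Sg k. tight A S r l s)) \<and>
             \<comment> \<open>(S4): in the limit game, NE- and SO-profiles have equal cost\<close>
             (\<forall>f h. is_NE At Gt St r lp lam f \<and> is_SO At Gt St r lp lam h \<longrightarrow>
                cost At (strats Gt St) r lp f = cost At (strats Gt St) r lp h) \<and>
             \<comment> \<open>(S5): NE-profiles of the limit game have positive cost\<close>
             (\<forall>f. is_NE At Gt St r lp lam f \<longrightarrow> cost At (strats Gt St) r lp f > 0)))"

end

theory Submission
  imports Defs
begin

text \<open>Measure volumes in units of the total volume \<open>T\<close> and prices in units of \<open>g\<close>. Along a
  subsequence, the normalized equilibrium profiles converge to a profile \<open>f\<close>. Their normalized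
  cost stays bounded, since every group either has a tight strategy, whose price converges, or is
  negligible; hence strategies through resources with infinite limit price carry vanishing volume,
  the equilibrium inequalities pass to the limit, \<open>f\<close> is an equilibrium of the limit game, and the
  normalized equilibrium costs converge to its cost, which is positive by (S5). The normalized
  optimal costs lie below the equilibrium costs and, by lower semicontinuity, eventually above
  the optimal cost of the limit game, which equals the cost of \<open>f\<close> by (S4). So the price of anarchy
  tends to 1 along a further subsequence of every subsequence.\<close>

lemma LIMSEQ_subsubseq:
  fixes X :: "nat \<Rightarrow> 'a::topological_space"
  assumes "\<And>\<psi> :: nat \<Rightarrow> nat. strict_mono \<psi> \<Longrightarrow>
      \<exists>\<psi>' :: nat \<Rightarrow> nat. strict_mono \<psi>' \<and> (X \<circ> \<psi> \<circ> \<psi>') \<longlonglongrightarrow> L"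
  shows "X \<longlonglongrightarrow> L"
proof (rule ccontr)
  assume "\<not> X \<longlonglongrightarrow> L"
  then obtain U where U: "open U" "L \<in> U" and "\<not> eventually (\<lambda>n. X n \<in> U) sequentially"
    unfolding tendsto_def by blast
  then have "infinite {n. X n \<notin> U}"
    by (simp add: eventually_cofinite[symmetric] cofinite_eq_sequentially)
  then obtain \<psi> :: "nat \<Rightarrow> nat" where \<psi>: "strict_mono \<psi>" "\<And>n. X (\<psi> n) \<notin> U"
    using infinite_enumerate by blast
  obtain \<psi>' where "(X \<circ> \<psi> \<circ> \<psi>') \<longlonglongrightarrow> L"
    using assms[OF \<psi>(1)] by blast
  then have "eventually (\<lambda>i. X (\<psi> (\<psi>' i)) \<in> U) sequentially"
    using U unfolding tendsto_def by simp
  then show False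
    using \<psi>(2) by (meson eventually_sequentially order_refl)
qed

lemma seq_compact_finite_family_convergent_subseq:
  fixes F :: "nat \<Rightarrow> 's \<Rightarrow> 'b::topological_space"
  assumes C: "seq_compact C" and "finite S" and "\<forall>i. \<forall>s\<in>S. F i s \<in> C"
  obtains \<phi> f where "strict_mono \<phi>" "\<And>s. s \<in> S \<Longrightarrow> (\<lambda>i. F (\<phi> i) s) \<longlonglongrightarrow> f s"
proof -
  have "\<exists>\<phi> f. strict_mono \<phi> \<and> (\<forall>s\<in>S. (\<lambda>i. F (\<phi> i) s) \<longlonglongrightarrow> f s \<and> f s \<in> C)"
    using assms(2,3)
  proof (induction S arbitrary: F rule: finite_induct)
    case empty
    show ?case using strict_mono_id by blast
  next
    case (insert x S)
    obtain \<phi>1 f where \<phi>1: "strict_mono \<phi>1"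
      and f: "\<forall>s\<in>S. (\<lambda>i. F (\<phi>1 i) s) \<longlonglongrightarrow> f s \<and> f s \<in> C"
      using insert.IH insert.prems by blast
    obtain c \<phi>2 where c: "c \<in> C" and \<phi>2: "strict_mono \<phi>2"
      and lim_x: "((\<lambda>i. F (\<phi>1 i) x) \<circ> \<phi>2) \<longlonglongrightarrow> c"
      using seq_compactE[OF C, of "\<lambda>i. F (\<phi>1 i) x"] insert.prems by auto
    have "(\<lambda>i. F (\<phi>1 (\<phi>2 i)) s) \<longlonglongrightarrow> f s" if "s \<in> S" for s
      using LIMSEQ_subseq_LIMSEQ[OF conjunct1[OF f[rule_format, OF that]] \<phi>2]
      by (simp add: o_def)
    then have "\<forall>s\<in>insert x S. (\<lambda>i. F ((\<phi>1 \<circ> \<phi>2) i) s) \<longlonglongrightarrow> (f(x := c)) s \<and> (f(x := c)) s \<in> C"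
      using f c lim_x insert.hyps(2) by (auto simp: o_def)
    then show ?case
      using strict_mono_o[OF \<phi>1 \<phi>2] by blast
  qed
  then show ?thesis
    using that by blast
qed

lemma mono_on_tendsto_compose_upper:
  fixes f :: "nat \<Rightarrow> real \<Rightarrow> real" and h :: "real \<Rightarrow> real"
  assumes mono: "\<And>i. mono_on {a..b} (f i)"
    and lim: "\<And>y. y \<in> {a..b} \<Longrightarrow> (\<lambda>i. f i y) \<longlonglongrightarrow> h y"
    and cont: "continuous_on {a..b} h"
    and X: "\<And>i. X i \<in> {a..b}" and X_lim: "X \<longlonglongrightarrow> x" and x: "x \<in> {a..b}"
    and c: "h x < c"
  shows "eventually (\<lambda>i. f i (X i) < c) sequentially"
proof -
  obtain y where y: "y \<in> {a..b}" "h y < c" "eventually (\<lambda>i. X i \<le> y) sequentially"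
  proof (cases "x < b")
    case True
    obtain e where "e > 0"
      and e: "\<And>y. y \<in> {a..b} \<Longrightarrow> dist y x < e \<Longrightarrow> dist (h y) (h x) < c - h x"
      using cont x c unfolding continuous_on_iff by (metis diff_gt_0_iff_gt)
    define y where "y = min (x + e / 2) b"
    have "y \<in> {a..b}" "x < y" "dist y x < e"
      using x True \<open>e > 0\<close> by (auto simp: y_def dist_real_def)
    moreover have "eventually (\<lambda>i. X i \<le> y) sequentially"
      using order_tendstoD(2)[OF X_lim \<open>x < y\<close>] by (rule eventually_mono) simp
    ultimately show ?thesis
      using that e by (force simp: dist_real_def)
  next
    case False
    then show ?thesis
      using that[of x] x c X by auto
  qed
  have "eventually (\<lambda>i. f i y < c) sequentially"
    using order_tendstoD(2)[OF lim[OF y(1)] y(2)] .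
  with y(3) show ?thesis
    by eventually_elim (meson X y(1) mono mono_onD le_less_trans)
qed

lemma mono_on_tendsto_compose:
  fixes f :: "nat \<Rightarrow> real \<Rightarrow> real" and h :: "real \<Rightarrow> real"
  assumes mono: "\<And>i. mono_on {a..b} (f i)"
    and lim: "\<And>y. y \<in> {a..b} \<Longrightarrow> (\<lambda>i. f i y) \<longlonglongrightarrow> h y"
    and cont: "continuous_on {a..b} h"
    and X: "\<And>i. X i \<in> {a..b}" and X_lim: "X \<longlonglongrightarrow> x" and x: "x \<in> {a..b}"
  shows "(\<lambda>i. f i (X i)) \<longlonglongrightarrow> h x"
proof (rule order_tendstoI)
  fix c assume "h x < c"
  then show "eventually (\<lambda>i. f i (X i) < c) sequentially"
    using mono_on_tendsto_compose_upper[OF mono lim cont X X_lim x] by blast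
next
  fix c assume c: "c < h x"
  have "mono_on {-b..-a} (\<lambda>y. - f i (- y))" for i
  proof (rule mono_onI)
    fix y z assume "y \<in> {-b..-a}" "z \<in> {-b..-a}" "y \<le> z"
    then show "- f i (- y) \<le> - f i (- z)"
      using mono_onD[OF mono, of "- z" "- y"] by auto
  qed
  moreover have "continuous_on {-b..-a} (\<lambda>y. - h (- y))"
    by (intro continuous_intros continuous_on_compose2[OF cont]) auto
  moreover have "(\<lambda>i. - f i (- y)) \<longlonglongrightarrow> - h (- y)" if "y \<in> {-b..-a}" for y
    using that by (intro tendsto_minus lim) auto
  ultimately have "eventually (\<lambda>i. - f i (- (- X i)) < - c) sequentially"
    using X x c
    by (intro mono_on_tendsto_compose_upper[where X = "\<lambda>i. - X i" and x = "- x"] tendsto_minus X_lim)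
      auto
  then show "eventually (\<lambda>i. c < f i (X i)) sequentially"
    by simp
qed

lemma cost_eq_sum_sprice: "cost A S r p F = (\<Sum>s\<in>S. F s * sprice A S r p F s)"
  unfolding cost_def sprice_def load_def
  by (simp add: sum_distrib_left sum_distrib_right mult_ac sum.swap[of _ A S])

locale congestion_game =
  fixes A :: "'a set" and K :: nat and Sg :: "nat \<Rightarrow> 's set"
    and r :: "'a \<Rightarrow> 's \<Rightarrow> real" and \<tau> :: "'a \<Rightarrow> real \<Rightarrow> real"
  assumes ncg: "ncg A K Sg r \<tau>"
begin

abbreviation S :: "'s set" where "S \<equiv> strats {..<K} Sg"

abbreviation rmax :: "'a \<Rightarrow> real" where "rmax a \<equiv> Max ((\<lambda>s. r a s) ` S)"

abbreviation group_cost :: "nat \<Rightarrow> ('s \<Rightarrow> real) \<Rightarrow> real" where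
  "group_cost k F \<equiv> \<Sum>s\<in>Sg k. F s * sprice A S r \<tau> F s"

lemma finite_resources: "finite A"
  using ncg unfolding ncg_def by blast

lemma finite_group: "k < K \<Longrightarrow> finite (Sg k)"
  using ncg unfolding ncg_def by blast

lemma finite_strats: "finite S"
  using finite_group unfolding strats_def by blast

lemma group_subset_strats: "k < K \<Longrightarrow> Sg k \<subseteq> S"
  unfolding strats_def by blast

lemma groups_disjoint: "k < K \<Longrightarrow> k' < K \<Longrightarrow> k \<noteq> k' \<Longrightarrow> Sg k \<inter> Sg k' = {}"
  using ncg unfolding ncg_def by blast

lemma r_nonneg: "a \<in> A \<Longrightarrow> s \<in> S \<Longrightarrow> 0 \<le> r a s"
  using ncg unfolding ncg_def by blast

lemma price_mono: "a \<in> A \<Longrightarrow> 0 \<le> x \<Longrightarrow> x \<le> y \<Longrightarrow> \<tau> a x \<le> \<tau> a y"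
  using ncg unfolding ncg_def by (meson atLeast_iff mono_onD order_trans)

lemma price_nonneg: "a \<in> A \<Longrightarrow> 0 \<le> x \<Longrightarrow> 0 \<le> \<tau> a x"
  using ncg unfolding ncg_def by blast

lemma r_le_rmax: "s \<in> S \<Longrightarrow> r a s \<le> rmax a"
  using finite_strats by (intro Max_ge) auto

lemma rmax_pos:
  assumes "a \<in> A"
  shows "0 < rmax a"
proof -
  have "0 < (\<Sum>s\<in>S. r a s)"
    using ncg assms unfolding ncg_def by blast
  then obtain s where "s \<in> S" "0 < r a s"
    by (meson not_le sum_nonpos)
  then show ?thesis
    using r_le_rmax[of s a] by linarith
qed

lemma sum_strats: "sum h S = (\<Sum>k<K. sum h (Sg k))"
  unfolding strats_def by (rule sum.UNION_disjoint) (use finite_group groups_disjoint in auto)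

lemma feasible_nonneg: "feasible {..<K} Sg d F \<Longrightarrow> \<forall>s\<in>S. 0 \<le> F s"
  unfolding feasible_def by blast

lemma feasible_sum_eq_total: "feasible {..<K} Sg d F \<Longrightarrow> sum F S = total K d"
  unfolding sum_strats feasible_def total_def by simp

lemma feasible_le_total:
  assumes F: "feasible {..<K} Sg d F" and d: "\<forall>k<K. 0 \<le> d k" and s: "s \<in> S"
  shows "F s \<le> total K d"
proof -
  obtain k where k: "k < K" "s \<in> Sg k"
    using s unfolding strats_def by blast
  have "F s \<le> sum F (Sg k)"
    using feasible_nonneg[OF F] group_subset_strats[OF k(1)] finite_group[OF k(1)] k(2)
    by (intro member_le_sum) auto
  also have "\<dots> = d k"
    using F k unfolding feasible_def by simp
  also have "\<dots> \<le> total K d"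
    unfolding total_def using d k by (intro member_le_sum) auto
  finally show ?thesis .
qed

lemma load_nonneg: "a \<in> A \<Longrightarrow> \<forall>s\<in>S. 0 \<le> F s \<Longrightarrow> S' \<subseteq> S \<Longrightarrow> 0 \<le> load S' r F a"
  unfolding load_def using r_nonneg by (intro sum_nonneg) auto

lemma load_subset_le: "a \<in> A \<Longrightarrow> \<forall>s\<in>S. 0 \<le> F s \<Longrightarrow> S' \<subseteq> S \<Longrightarrow> load S' r F a \<le> load S r F a"
  unfolding load_def using r_nonneg finite_strats by (intro sum_mono2) auto

lemma term_le_load:
  "a \<in> A \<Longrightarrow> \<forall>s\<in>S. 0 \<le> F s \<Longrightarrow> s \<in> S \<Longrightarrow> r a s * F s \<le> load S r F a"
  unfolding load_def using r_nonneg finite_strats by (intro member_le_sum) auto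

lemma load_le_rmax_sum:
  "\<forall>s\<in>S. 0 \<le> F s \<Longrightarrow> S' \<subseteq> S \<Longrightarrow> load S' r F a \<le> rmax a * sum F S'"
  unfolding load_def sum_distrib_left
  using r_le_rmax by (intro sum_mono mult_right_mono) auto

lemma sprice_nonneg:
  assumes "\<forall>s\<in>S. 0 \<le> F s" "s \<in> S"
  shows "0 \<le> sprice A S r \<tau> F s"
  unfolding sprice_def
  using assms r_nonneg price_nonneg load_nonneg by (intro sum_nonneg mult_nonneg_nonneg) auto

lemma partial_cost_le_cost:
  assumes F: "\<forall>s\<in>S. 0 \<le> F s" and "A' \<subseteq> A" "S' \<subseteq> S"
  shows "(\<Sum>a\<in>A'. load S' r F a * \<tau> a (load S' r F a)) \<le> cost A S r \<tau> F"
proof -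
  have "load S' r F a * \<tau> a (load S' r F a) \<le> load S r F a * \<tau> a (load S r F a)" if a: "a \<in> A" for a
    using load_subset_le[OF a F] load_nonneg[OF a F] assms(3)
    by (intro mult_mono price_mono[OF a] price_nonneg[OF a]) auto
  then have "(\<Sum>a\<in>A'. load S' r F a * \<tau> a (load S' r F a))
      \<le> (\<Sum>a\<in>A'. load S r F a * \<tau> a (load S r F a))"
    using assms(2) by (intro sum_mono) blast
  also have "\<dots> \<le> cost A S r \<tau> F"
    unfolding cost_def
    using assms finite_resources load_nonneg price_nonneg by (intro sum_mono2) auto
  finally show ?thesis .
qed

lemma cost_ge_load_price:
  assumes "a \<in> A" "\<forall>s\<in>S. 0 \<le> F s" "s \<in> S" "0 \<le> z" "z \<le> r a s * F s"
  shows "z * \<tau> a z \<le> cost A S r \<tau> F"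
proof -
  have "z \<le> load S r F a"
    using assms term_le_load by (meson order_trans)
  then have "z * \<tau> a z \<le> load S r F a * \<tau> a (load S r F a)"
    using assms price_mono price_nonneg by (intro mult_mono) auto
  also have "\<dots> \<le> cost A S r \<tau> F"
    using partial_cost_le_cost[of F "{a}" S] assms by simp
  finally show ?thesis .
qed

lemma cost_eq_sum_groups: "cost A S r \<tau> F = (\<Sum>k<K. group_cost k F)"
  unfolding cost_eq_sum_sprice sum_strats ..

lemma NE_weighted_price_le:
  assumes F: "is_NE A {..<K} Sg r \<tau> d F" and k: "k < K" and s: "s \<in> Sg k" and s': "s' \<in> Sg k"
  shows "F s * sprice A S r \<tau> F s \<le> F s * sprice A S r \<tau> F s'"
proof (cases "F s > 0")
  case True
  then show ?thesis
    using F k s s' unfolding is_NE_def by (auto intro: mult_left_mono)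
next
  case False
  then have "F s = 0"
    using F s group_subset_strats[OF k] unfolding is_NE_def feasible_def by force
  then show ?thesis by simp
qed

lemma NE_group_cost_le:
  assumes F: "is_NE A {..<K} Sg r \<tau> d F" and k: "k < K" and s': "s' \<in> Sg k"
  shows "group_cost k F \<le> d k * sprice A S r \<tau> F s'"
proof -
  have "(\<Sum>s\<in>Sg k. F s * sprice A S r \<tau> F s) \<le> (\<Sum>s\<in>Sg k. F s * sprice A S r \<tau> F s')"
    using NE_weighted_price_le[OF F k _ s'] by (rule sum_mono)
  also have "\<dots> = d k * sprice A S r \<tau> F s'"
    using F k unfolding is_NE_def feasible_def sum_distrib_right[symmetric] by simp
  finally show ?thesis .
qed

end

text \<open>The conclusions (S0)--(S5) of scalability for one sequence \<open>d\<close> of volume vectors, which is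
  already the subsequence; \<open>T\<close>, \<open>At\<close>, \<open>St\<close>, \<open>Gt\<close>, \<open>TS\<close> and \<open>lp\<close> below stand for \<open>T(d)\<close>, the tight
  resources, the tight strategies of each group, the groups having one, all tight strategies,
  and the real-valued limit prices.\<close>

locale scaling = congestion_game +
  fixes d :: "nat \<Rightarrow> nat \<Rightarrow> real" and g :: "nat \<Rightarrow> real" and lam :: "nat \<Rightarrow> real"
    and l :: "'a \<Rightarrow> real \<Rightarrow> ereal"
  assumes volume_nonneg: "\<And>i k. k < K \<Longrightarrow> 0 \<le> d i k"
    and total_pos: "\<And>i. 0 < total K (d i)"
    and scale_pos: "\<And>i. 0 < g i"
    and shares_tendsto: "\<And>k. k < K \<Longrightarrow> (\<lambda>i. d i k / total K (d i)) \<longlonglongrightarrow> lam k"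
    and limit_prices: "\<And>a. a \<in> A \<Longrightarrow> limit_price_fun (Ires (strats {..<K} Sg) r a) (l a)"
    and scaled_price_tendsto:
      "\<And>a x. a \<in> A \<Longrightarrow> x \<in> Ires (strats {..<K} Sg) r a \<Longrightarrow>
        (\<lambda>i. ereal (\<tau> a (total K (d i) * x) / g i)) \<longlonglongrightarrow> l a x"
    and negligible_or_tight:
      "\<And>k F. k < K \<Longrightarrow> \<forall>i. feasible {..<K} Sg (d i) (F i) \<Longrightarrow>
        (\<lambda>i. (\<Sum>s\<in>Sg k. F i s * sprice A (strats {..<K} Sg) r \<tau> (F i) s) / (total K (d i) * g i))
          \<longlonglongrightarrow> 0
        \<or> (\<exists>s\<in>Sg k. tight A (strats {..<K} Sg) r l s)"
    and limit_NE_cost_eq_SO_cost: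
      "\<And>f h. is_NE (tight_res A (strats {..<K} Sg) r l) (tight_groups A (strats {..<K} Sg) r l Sg K)
          (tight_strats A (strats {..<K} Sg) r l Sg) r (\<lambda>a x. real_of_ereal (l a x)) lam f \<Longrightarrow>
        is_SO (tight_res A (strats {..<K} Sg) r l) (tight_groups A (strats {..<K} Sg) r l Sg K)
          (tight_strats A (strats {..<K} Sg) r l Sg) r (\<lambda>a x. real_of_ereal (l a x)) lam h \<Longrightarrow>
        cost (tight_res A (strats {..<K} Sg) r l)
          (strats (tight_groups A (strats {..<K} Sg) r l Sg K)
            (tight_strats A (strats {..<K} Sg) r l Sg))
          r (\<lambda>a x. real_of_ereal (l a x)) f =
        cost (tight_res A (strats {..<K} Sg) r l)
          (strats (tight_groups A (strats {..<K} Sg) r l Sg K)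
            (tight_strats A (strats {..<K} Sg) r l Sg))
          r (\<lambda>a x. real_of_ereal (l a x)) h"
    and limit_NE_cost_pos:
      "\<And>f. is_NE (tight_res A (strats {..<K} Sg) r l) (tight_groups A (strats {..<K} Sg) r l Sg K)
          (tight_strats A (strats {..<K} Sg) r l Sg) r (\<lambda>a x. real_of_ereal (l a x)) lam f \<Longrightarrow>
        0 < cost (tight_res A (strats {..<K} Sg) r l)
          (strats (tight_groups A (strats {..<K} Sg) r l Sg K)
            (tight_strats A (strats {..<K} Sg) r l Sg))
          r (\<lambda>a x. real_of_ereal (l a x)) f"
begin

abbreviation T :: "nat \<Rightarrow> real" where "T i \<equiv> total K (d i)"

abbreviation At where "At \<equiv> tight_res A S r l"
abbreviation St where "St \<equiv> tight_strats A S r l Sg"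
abbreviation Gt where "Gt \<equiv> tight_groups A S r l Sg K"
abbreviation TS where "TS \<equiv> strats Gt St"
abbreviation lp where "lp \<equiv> \<lambda>a x. real_of_ereal (l a x)"

lemma Ires_eq: "Ires S r a = {0..rmax a}"
  unfolding Ires_def ..

lemma shares_nonneg:
  assumes "k < K"
  shows "0 \<le> lam k"
  by (rule LIMSEQ_le_const[OF shares_tendsto[OF assms]])
    (intro exI[of _ 0] allI impI divide_nonneg_pos volume_nonneg[OF assms] total_pos)

lemma shares_sum: "(\<Sum>k<K. lam k) = 1"
proof -
  have "(\<lambda>i. \<Sum>k<K. d i k / T i) \<longlonglongrightarrow> (\<Sum>k<K. lam k)"
    by (intro tendsto_sum shares_tendsto) simp
  moreover have "(\<Sum>k<K. d i k / T i) = 1" for i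
    using total_pos[of i] unfolding total_def by (simp add: sum_divide_distrib[symmetric])
  ultimately show ?thesis
    by (simp add: LIMSEQ_const_iff)
qed

lemma normalized_in_unit:
  assumes "feasible {..<K} Sg (d i) F" "s \<in> S"
  shows "F s / T i \<in> {0..1}"
proof -
  have "0 \<le> F s" "F s \<le> T i"
    using feasible_nonneg[OF assms(1)] feasible_le_total[OF assms(1) _ assms(2)] volume_nonneg assms(2)
    by auto
  then show ?thesis
    using total_pos[of i] by simp
qed

lemma normalized_load_in_Ires:
  assumes F: "feasible {..<K} Sg (d i) F" and "a \<in> A" "S' \<subseteq> S"
  shows "load S' r F a / T i \<in> Ires S r a"
proof -
  have nn: "\<forall>s\<in>S. 0 \<le> F s"
    using feasible_nonneg[OF F] .
  have "load S' r F a \<le> load S r F a" "0 \<le> load S' r F a"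
    using load_subset_le[OF assms(2) nn] load_nonneg[OF assms(2) nn] assms(3) by auto
  moreover have "load S r F a \<le> rmax a * T i"
    using load_le_rmax_sum[OF nn, of S] feasible_sum_eq_total[OF F] by simp
  ultimately show ?thesis
    unfolding Ires_eq using total_pos[of i] by (simp add: divide_le_eq mult.commute)
qed

lemma normalized_profiles_convergent_subseq:
  fixes \<phi> :: "nat \<Rightarrow> nat"
  assumes "\<And>i. feasible {..<K} Sg (d (\<phi> i)) (F i)"
  obtains \<psi> f where "strict_mono \<psi>" "\<And>s. s \<in> S \<Longrightarrow> (\<lambda>i. F (\<psi> i) s / T (\<phi> (\<psi> i))) \<longlonglongrightarrow> f s"
proof -
  have "\<forall>i. \<forall>s\<in>S. F i s / T (\<phi> i) \<in> {0..1}"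
    using normalized_in_unit[OF assms] by blast
  from seq_compact_finite_family_convergent_subseq[OF compact_imp_seq_compact[OF compact_Icc]
      finite_strats this]
  show ?thesis
    using that by blast
qed

lemma real_limit_price:
  assumes a: "a \<in> A" and rv: "real_valued_on (Ires S r a) (l a)"
  shows "\<And>x. x \<in> Ires S r a \<Longrightarrow> l a x = ereal (lp a x)"
    and "\<And>x. x \<in> Ires S r a \<Longrightarrow> 0 \<le> lp a x"
    and "continuous_on (Ires S r a) (lp a)"
proof -
  have "rmax a \<in> Ires S r a" "0 < rmax a"
    using rmax_pos[OF a] unfolding Ires_eq by auto
  then have "\<not> (\<forall>x\<in>Ires S r a. 0 < x \<longrightarrow> l a x = \<infinity>)"
    using rv unfolding real_valued_on_def by force
  then have "(\<forall>x\<in>Ires S r a. 0 \<le> l a x) \<and> continuous_on (Ires S r a) (lp a)"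
    using limit_prices[OF a] unfolding limit_price_fun_def by blast
  then show "\<And>x. x \<in> Ires S r a \<Longrightarrow> 0 \<le> lp a x" "continuous_on (Ires S r a) (lp a)"
    by (auto simp: real_of_ereal_pos)
  show "\<And>x. x \<in> Ires S r a \<Longrightarrow> l a x = ereal (lp a x)"
    using rv unfolding real_valued_on_def by (simp add: ereal_real)
qed

lemma scaled_price_subseq_tendsto:
  assumes a: "a \<in> A" and rv: "real_valued_on (Ires S r a) (l a)" and x: "x \<in> Ires S r a"
    and \<phi>: "strict_mono \<phi>"
  shows "(\<lambda>i. \<tau> a (T (\<phi> i) * x) / g (\<phi> i)) \<longlonglongrightarrow> lp a x"
proof -
  have "(\<lambda>i. ereal (\<tau> a (T i * x) / g i)) \<longlonglongrightarrow> ereal (lp a x)"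
    using scaled_price_tendsto[OF a x] real_limit_price(1)[OF a rv x] by simp
  then have "(\<lambda>i. \<tau> a (T i * x) / g i) \<longlonglongrightarrow> lp a x"
    by (simp add: lim_ereal)
  from LIMSEQ_subseq_LIMSEQ[OF this \<phi>] show ?thesis
    by (simp add: o_def)
qed

lemma scaled_price_compose_tendsto:
  assumes a: "a \<in> A" and rv: "real_valued_on (Ires S r a) (l a)" and \<phi>: "strict_mono \<phi>"
    and X: "\<And>i. X i \<in> Ires S r a" and X_lim: "X \<longlonglongrightarrow> x" and x: "x \<in> Ires S r a"
  shows "(\<lambda>i. \<tau> a (T (\<phi> i) * X i) / g (\<phi> i)) \<longlonglongrightarrow> lp a x"
proof -
  have mono: "mono_on {0..rmax a} (\<lambda>y. \<tau> a (T (\<phi> i) * y) / g (\<phi> i))" for i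
    using total_pos[of "\<phi> i"] scale_pos[of "\<phi> i"]
    by (intro mono_onI divide_right_mono price_mono[OF a]) auto
  have lim: "(\<lambda>i. \<tau> a (T (\<phi> i) * y) / g (\<phi> i)) \<longlonglongrightarrow> lp a y" if "y \<in> {0..rmax a}" for y
    using scaled_price_subseq_tendsto[OF a rv _ \<phi>] that unfolding Ires_eq by blast
  show ?thesis
    using mono_on_tendsto_compose[OF mono lim real_limit_price(3)[OF a rv, unfolded Ires_eq]
        X[unfolded Ires_eq] X_lim x[unfolded Ires_eq]] .
qed

lemma nontight_limit_price_infinite:
  assumes "s \<in> S" "\<not> tight A S r l s"
  obtains a where "a \<in> A" "0 < r a s" "\<And>x. x \<in> Ires S r a \<Longrightarrow> 0 < x \<Longrightarrow> l a x = \<infinity>"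
proof -
  obtain a where "a \<in> A" "0 < r a s" "\<not> real_valued_on (Ires S r a) (l a)"
    using assms unfolding tight_def by blast
  with limit_prices[of a] that show ?thesis
    unfolding limit_price_fun_def by blast
qed

lemma scaled_price_le_normalized_cost:
  assumes F: "feasible {..<K} Sg (d j) F" and a: "a \<in> A" and s: "s \<in> S"
    and y: "0 \<le> y" "y \<le> r a s * (F s / T j)"
  shows "y * (\<tau> a (T j * y) / g j) \<le> cost A S r \<tau> F / (T j * g j)"
proof -
  have T: "0 < T j" and g: "0 < g j"
    using total_pos scale_pos by auto
  have "T j * y \<le> T j * (r a s * (F s / T j))"
    using T y(2) by (intro mult_left_mono) auto
  then have "T j * y \<le> r a s * F s"
    using T by simp
  then have "(T j * y) * \<tau> a (T j * y) \<le> cost A S r \<tau> F"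
    using T y(1) feasible_nonneg[OF F] by (intro cost_ge_load_price[OF a _ s]) auto
  then have "(T j * y) * \<tau> a (T j * y) / (T j * g j) \<le> cost A S r \<tau> F / (T j * g j)"
    by (rule divide_right_mono) (use T g in simp)
  then show ?thesis
    using T g by simp
qed

lemma nontight_normalized_tendsto_0:
  assumes \<phi>: "strict_mono \<phi>" and F: "\<And>i. feasible {..<K} Sg (d (\<phi> i)) (F i)"
    and bounded: "eventually (\<lambda>i. cost A S r \<tau> (F i) / (T (\<phi> i) * g (\<phi> i)) \<le> B) sequentially"
    and s: "s \<in> S" and nontight: "\<not> tight A S r l s"
  shows "(\<lambda>i. F i s / T (\<phi> i)) \<longlonglongrightarrow> 0"
proof (rule order_tendstoI)
  fix b :: real assume "b < 0"
  then show "eventually (\<lambda>i. b < F i s / T (\<phi> i)) sequentially"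
    using normalized_in_unit[OF F s] by (auto intro: always_eventually less_le_trans)
next
  fix c :: real assume "0 < c"
  obtain a where a: "a \<in> A" "0 < r a s"
    and infinite: "\<And>x. x \<in> Ires S r a \<Longrightarrow> 0 < x \<Longrightarrow> l a x = \<infinity>"
    using nontight_limit_price_infinite[OF s nontight] by blast
  define y where "y = r a s * min c 1"
  have "0 < y" "y \<le> r a s"
    using a(2) \<open>0 < c\<close> by (auto simp: y_def mult_le_cancel_left1)
  then have y: "0 < y" "y \<in> Ires S r a"
    using r_le_rmax[OF s, of a] unfolding Ires_eq by auto
  have "(\<lambda>i. ereal (\<tau> a (T i * y) / g i)) \<longlonglongrightarrow> \<infinity>"
    using scaled_price_tendsto[OF a(1) y(2)] infinite[OF y(2,1)] by simp
  from LIMSEQ_subseq_LIMSEQ[OF this \<phi>]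
  have "eventually (\<lambda>i. B / y < \<tau> a (T (\<phi> i) * y) / g (\<phi> i)) sequentially"
    unfolding tendsto_PInfty o_def by simp
  then have "eventually (\<lambda>i. B < y * (\<tau> a (T (\<phi> i) * y) / g (\<phi> i))) sequentially"
    by (rule eventually_mono) (use y(1) in \<open>simp add: pos_divide_less_eq mult.commute\<close>)
  with bounded show "eventually (\<lambda>i. F i s / T (\<phi> i) < c) sequentially"
  proof eventually_elim
    case (elim i)
    show ?case
    proof (rule ccontr)
      assume "\<not> F i s / T (\<phi> i) < c"
      then have "min c 1 \<le> F i s / T (\<phi> i)"
        by linarith
      then have "y \<le> r a s * (F i s / T (\<phi> i))"
        unfolding y_def using a(2) by (intro mult_left_mono) auto
      with y(1) have "y * (\<tau> a (T (\<phi> i) * y) / g (\<phi> i)) \<le> cost A S r \<tau> (F i) / (T (\<phi> i) * g (\<phi> i))"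
        by (intro scaled_price_le_normalized_cost[OF F a(1) s]) auto
      with elim show False
        by linarith
    qed
  qed
qed

lemma TS_eq: "TS = {s \<in> S. tight A S r l s}"
  unfolding strats_def tight_groups_def tight_strats_def by auto

lemma St_eq: "St k = {s \<in> Sg k. tight A S r l s}"
  unfolding tight_strats_def ..

lemma Gt_subset: "Gt \<subseteq> {..<K}"
  unfolding tight_groups_def by auto

lemma At_subset: "At \<subseteq> A"
  unfolding tight_res_def by auto

lemma finite_TS: "finite TS"
  using TS_eq finite_strats by simp

lemma tight_res_real_valued: "a \<in> At \<Longrightarrow> real_valued_on (Ires S r a) (l a)"
  unfolding tight_res_def tight_def by auto

lemma tight_res_of_tight_strat: "s \<in> S \<Longrightarrow> tight A S r l s \<Longrightarrow> a \<in> A \<Longrightarrow> 0 < r a s \<Longrightarrow> a \<in> At"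
  unfolding tight_res_def by auto

lemma TS_eq_Union: "TS = (\<Union>k\<in>Gt. St k)"
  unfolding strats_def[of Gt St] ..

lemma sum_TS: "sum h TS = (\<Sum>k\<in>Gt. sum h (St k))"
  unfolding TS_eq_Union
proof (rule sum.UNION_disjoint)
  show "finite Gt"
    using Gt_subset finite_subset by blast
  show "\<forall>k\<in>Gt. finite (St k)"
    using Gt_subset finite_group St_eq by auto
  show "\<forall>k\<in>Gt. \<forall>k'\<in>Gt. k \<noteq> k' \<longrightarrow> St k \<inter> St k' = {}"
    using Gt_subset groups_disjoint St_eq by blast
qed

lemma limit_feasible_in_unit:
  assumes h: "feasible Gt St lam h" and s: "s \<in> TS"
  shows "h s \<in> {0..1}"
proof -
  obtain k where k: "k \<in> Gt" "s \<in> St k"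
    using s unfolding TS_eq_Union by blast
  have kK: "k < K"
    using k Gt_subset by auto
  have "h s \<le> sum h (St k)"
    using h k finite_group[OF kK] unfolding feasible_def TS_eq_Union St_eq
    by (intro member_le_sum) auto
  also have "\<dots> = lam k"
    using h k unfolding feasible_def by simp
  also have "\<dots> \<le> (\<Sum>k<K. lam k)"
    using kK shares_nonneg by (intro member_le_sum) auto
  finally show ?thesis
    using h s shares_sum unfolding feasible_def by simp
qed

lemma limit_game_load_in_Ires:
  assumes h: "feasible Gt St lam h" and a: "a \<in> At"
  shows "load TS r h a \<in> Ires S r a"
proof -
  have nn: "\<forall>s\<in>TS. 0 \<le> h s"
    using h unfolding feasible_def by blast
  have "0 \<le> load TS r h a"
    unfolding load_def using nn r_nonneg a At_subset TS_eq by (intro sum_nonneg) auto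
  moreover have "load TS r h a \<le> (\<Sum>s\<in>TS. rmax a * h s)"
    unfolding load_def using nn r_le_rmax TS_eq by (intro sum_mono mult_right_mono) auto
  moreover have "(\<Sum>s\<in>TS. rmax a * h s) = rmax a * (\<Sum>k\<in>Gt. lam k)"
    using h unfolding sum_distrib_left[symmetric] sum_TS feasible_def by simp
  moreover have "(\<Sum>k\<in>Gt. lam k) \<le> (\<Sum>k<K. lam k)"
    using Gt_subset shares_nonneg by (intro sum_mono2) auto
  moreover have "0 < rmax a"
    using rmax_pos a At_subset by blast
  ultimately have "load TS r h a \<le> rmax a"
    unfolding shares_sum by (metis mult_left_le less_imp_le order_trans)
  then show ?thesis
    unfolding Ires_eq using \<open>0 \<le> load TS r h a\<close> by simp
qed

lemma limit_cost_nonneg: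
  assumes h: "feasible Gt St lam h"
  shows "0 \<le> cost At TS r lp h"
  unfolding cost_def
proof (rule sum_nonneg)
  fix a assume a: "a \<in> At"
  have "load TS r h a \<in> Ires S r a"
    using limit_game_load_in_Ires[OF h a] .
  then show "0 \<le> load TS r h a * lp a (load TS r h a)"
    using real_limit_price(2) a At_subset tight_res_real_valued[OF a] unfolding Ires_eq by auto
qed

lemma limit_cost_tendsto:
  assumes H: "\<And>n. feasible Gt St lam (H n)" and h: "feasible Gt St lam h"
    and H_lim: "\<And>s. s \<in> TS \<Longrightarrow> (\<lambda>n. H n s) \<longlonglongrightarrow> h s"
  shows "(\<lambda>n. cost At TS r lp (H n)) \<longlonglongrightarrow> cost At TS r lp h"
  unfolding cost_def
proof (intro tendsto_sum tendsto_mult)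
  fix a assume a: "a \<in> At"
  show load: "(\<lambda>n. load TS r (H n) a) \<longlonglongrightarrow> load TS r h a"
    unfolding load_def by (intro tendsto_sum tendsto_mult_left H_lim)
  show "(\<lambda>n. lp a (load TS r (H n) a)) \<longlonglongrightarrow> lp a (load TS r h a)"
    using a At_subset tight_res_real_valued[OF a]
      limit_game_load_in_Ires[OF H a] limit_game_load_in_Ires[OF h a]
    by (intro continuous_on_tendsto_compose[OF real_limit_price(3) load]) auto
qed

lemma limit_feasible_closed:
  assumes H: "\<And>n. feasible Gt St lam (H n)"
    and H_lim: "\<And>s. s \<in> TS \<Longrightarrow> (\<lambda>n. H n s) \<longlonglongrightarrow> h s"
  shows "feasible Gt St lam h"
  unfolding feasible_def
proof (intro conjI ballI)
  fix s assume s: "s \<in> TS"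
  show "0 \<le> h s"
    using H s unfolding feasible_def by (intro LIMSEQ_le_const[OF H_lim[OF s]]) auto
next
  fix k assume k: "k \<in> Gt"
  have "(\<lambda>n. sum (H n) (St k)) \<longlonglongrightarrow> sum h (St k)"
    using k by (intro tendsto_sum H_lim) (auto simp: TS_eq_Union)
  moreover have "sum (H n) (St k) = lam k" for n
    using H[of n] k unfolding feasible_def by simp
  ultimately show "sum h (St k) = lam k"
    by (simp add: LIMSEQ_const_iff)
qed

lemma limit_SO_exists:
  assumes "feasible Gt St lam f"
  obtains h where "is_SO At Gt St r lp lam h"
proof -
  define m where "m = (INF h\<in>{h. feasible Gt St lam h}. cost At TS r lp h)"
  have bdd: "bdd_below ((\<lambda>h. cost At TS r lp h) ` {h. feasible Gt St lam h})"
    unfolding bdd_below_def using limit_cost_nonneg by blast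
  have m_le: "m \<le> cost At TS r lp h" if "feasible Gt St lam h" for h
    unfolding m_def using that bdd by (intro cINF_lower) auto
  have "\<exists>h. feasible Gt St lam h \<and> cost At TS r lp h < m + inverse (real (Suc n))" for n
    using cINF_less_iff[OF _ bdd, of "m + inverse (real (Suc n))"] assms
    unfolding m_def by auto
  then obtain H where H: "\<And>n. feasible Gt St lam (H n)"
    and H_cost: "\<And>n. cost At TS r lp (H n) < m + inverse (real (Suc n))"
    by metis
  have "\<forall>n. \<forall>s\<in>TS. H n s \<in> {0..1}"
    using limit_feasible_in_unit[OF H] by blast
  then obtain \<phi> h where \<phi>: "strict_mono \<phi>"
    and H_lim: "\<And>s. s \<in> TS \<Longrightarrow> (\<lambda>i. H (\<phi> i) s) \<longlonglongrightarrow> h s"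
    using seq_compact_finite_family_convergent_subseq[OF compact_imp_seq_compact[OF compact_Icc]
        finite_TS]
    by blast
  have h: "feasible Gt St lam h"
    using limit_feasible_closed[OF H H_lim] .
  have "(\<lambda>i. m + inverse (real (Suc (\<phi> i)))) \<longlonglongrightarrow> m"
    using LIMSEQ_subseq_LIMSEQ[OF LIMSEQ_inverse_real_of_nat_add[of m] \<phi>] by (simp add: o_def)
  moreover have
    "eventually (\<lambda>i. cost At TS r lp (H (\<phi> i)) \<le> m + inverse (real (Suc (\<phi> i)))) sequentially"
    by (intro always_eventually allI less_imp_le H_cost)
  ultimately have "cost At TS r lp h \<le> m"
    using tendsto_le[OF trivial_limit_sequentially _ limit_cost_tendsto[OF H h H_lim]] by blast
  then have "is_SO At Gt St r lp lam h"
    unfolding is_SO_def using h m_le by fastforce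
  then show ?thesis ..
qed

end

locale profile_limit = scaling +
  fixes \<phi> :: "nat \<Rightarrow> nat" and F and f
  assumes subseq: "strict_mono \<phi>"
    and feasible_profiles: "\<And>i. feasible {..<K} Sg (d (\<phi> i)) (F i)"
    and normalized_tendsto:
      "\<And>s. s \<in> strats {..<K} Sg \<Longrightarrow> (\<lambda>i. F i s / total K (d (\<phi> i))) \<longlonglongrightarrow> f s"
begin

lemma limit_in_unit: "s \<in> S \<Longrightarrow> f s \<in> {0..1}"
  using normalized_in_unit[OF feasible_profiles] normalized_tendsto
  by (meson closed_atLeastAtMost closed_sequentially)

lemma normalized_load_tendsto:
  assumes "S' \<subseteq> S"
  shows "(\<lambda>i. load S' r (F i) a / T (\<phi> i)) \<longlonglongrightarrow> load S' r f a"
  unfolding load_def sum_divide_distrib times_divide_eq_right[symmetric]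
  using assms by (intro tendsto_sum tendsto_mult_left normalized_tendsto) auto

lemma limit_load_in_Ires:
  assumes "a \<in> A" "S' \<subseteq> S"
  shows "load S' r f a \<in> Ires S r a"
  using normalized_load_in_Ires[OF feasible_profiles assms] normalized_load_tendsto[OF assms(2)]
  unfolding Ires_eq by (meson closed_atLeastAtMost closed_sequentially)

lemma scaled_sprice_tendsto:
  assumes s: "s \<in> S" and tight: "tight A S r l s"
  shows "(\<lambda>i. sprice A S r \<tau> (F i) s / g (\<phi> i)) \<longlonglongrightarrow> (\<Sum>a\<in>A. r a s * lp a (load S r f a))"
  unfolding sprice_def sum_divide_distrib times_divide_eq_right[symmetric]
proof (rule tendsto_sum)
  fix a assume a: "a \<in> A"
  show "(\<lambda>i. r a s * (\<tau> a (load S r (F i) a) / g (\<phi> i))) \<longlonglongrightarrow> r a s * lp a (load S r f a)"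
  proof (cases "r a s = 0")
    case False
    then have rv: "real_valued_on (Ires S r a) (l a)"
      using tight a r_nonneg[OF a s] unfolding tight_def by auto
    have "\<tau> a (load S r (F i) a) = \<tau> a (T (\<phi> i) * (load S r (F i) a / T (\<phi> i)))" for i
      using total_pos[of "\<phi> i"] by simp
    moreover have "(\<lambda>i. \<tau> a (T (\<phi> i) * (load S r (F i) a / T (\<phi> i))) / g (\<phi> i)) \<longlonglongrightarrow> lp a (load S r f a)"
      using normalized_load_in_Ires[OF feasible_profiles a] limit_load_in_Ires[OF a]
      by (intro scaled_price_compose_tendsto[OF a rv subseq _ normalized_load_tendsto]) auto
    ultimately show ?thesis
      by (intro tendsto_mult_left) simp
  qed simp
qed

text \<open>Lower semicontinuity of the normalized cost: only the tight resources and strategies are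
  kept in the lower bound, and their loads converge inside the region where the limit prices are
  real-valued and continuous.\<close>

lemma limit_cost_less_normalized_cost:
  assumes "b < cost At TS r lp f"
  shows "eventually (\<lambda>i. b < cost A S r \<tau> (F i) / (T (\<phi> i) * g (\<phi> i))) sequentially"
proof -
  define Y where "Y a i = load TS r (F i) a / T (\<phi> i)" for a i
  have TS_subset: "TS \<subseteq> S"
    using TS_eq by blast
  have lower: "(\<Sum>a\<in>At. Y a i * (\<tau> a (T (\<phi> i) * Y a i) / g (\<phi> i)))
      \<le> cost A S r \<tau> (F i) / (T (\<phi> i) * g (\<phi> i))" for i
  proof -
    have T: "0 < T (\<phi> i)" and g: "0 < g (\<phi> i)"
      using total_pos scale_pos by auto
    have "(\<Sum>a\<in>At. load TS r (F i) a * \<tau> a (load TS r (F i) a)) / (T (\<phi> i) * g (\<phi> i))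
        \<le> cost A S r \<tau> (F i) / (T (\<phi> i) * g (\<phi> i))"
      using partial_cost_le_cost[OF feasible_nonneg[OF feasible_profiles] At_subset TS_subset] T g
      by (intro divide_right_mono) auto
    then show ?thesis
      unfolding sum_divide_distrib Y_def using T g by (simp add: field_simps)
  qed
  have "(\<lambda>i. \<Sum>a\<in>At. Y a i * (\<tau> a (T (\<phi> i) * Y a i) / g (\<phi> i))) \<longlonglongrightarrow> cost At TS r lp f"
    unfolding cost_def
  proof (intro tendsto_sum tendsto_mult)
    fix a assume a: "a \<in> At"
    then have aA: "a \<in> A"
      using At_subset by blast
    show Y_lim: "Y a \<longlonglongrightarrow> load TS r f a"
      unfolding Y_def by (rule normalized_load_tendsto[OF TS_subset])
    show "(\<lambda>i. \<tau> a (T (\<phi> i) * Y a i) / g (\<phi> i)) \<longlonglongrightarrow> lp a (load TS r f a)"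
      using normalized_load_in_Ires[OF feasible_profiles aA TS_subset]
        limit_load_in_Ires[OF aA TS_subset]
      by (intro scaled_price_compose_tendsto[OF aA tight_res_real_valued[OF a] subseq _ Y_lim])
        (auto simp: Y_def)
  qed
  from order_tendstoD(1)[OF this assms] show ?thesis
    by (rule eventually_mono) (use lower in \<open>meson less_le_trans\<close>)
qed

end

locale bounded_profile_limit = profile_limit +
  assumes cost_bounded: "\<exists>B. eventually (\<lambda>i. cost A (strats {..<K} Sg) r \<tau> (F i) /
    (total K (d (\<phi> i)) * g (\<phi> i)) \<le> B) sequentially"
begin

lemma nontight_limit_zero:
  assumes "s \<in> S" "\<not> tight A S r l s"
  shows "f s = 0"
proof -
  obtain B where "eventually (\<lambda>i. cost A S r \<tau> (F i) / (T (\<phi> i) * g (\<phi> i)) \<le> B) sequentially"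
    using cost_bounded by blast
  from nontight_normalized_tendsto_0[OF subseq feasible_profiles this assms]
  show ?thesis
    using normalized_tendsto[OF assms(1)] LIMSEQ_unique by blast
qed

lemma load_eq_tight_load: "load S r f a = load TS r f a"
  unfolding load_def
  by (rule sum.mono_neutral_right) (use finite_strats TS_eq nontight_limit_zero in auto)

lemma limit_sprice_eq:
  assumes s: "s \<in> S" and tight: "tight A S r l s"
  shows "sprice At TS r lp f s = (\<Sum>a\<in>A. r a s * lp a (load S r f a))"
  unfolding sprice_def load_eq_tight_load
proof (rule sum.mono_neutral_left)
  show "\<forall>a\<in>A - At. r a s * lp a (load TS r f a) = 0"
    using tight_res_of_tight_strat[OF s tight] r_nonneg s by (fastforce simp: less_le)
qed (use finite_resources At_subset in auto)

lemma limit_feasible: "feasible Gt St lam f"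
  unfolding feasible_def
proof (intro conjI ballI)
  fix s assume "s \<in> TS"
  then show "0 \<le> f s"
    using limit_in_unit TS_eq by auto
next
  fix k assume k: "k \<in> Gt"
  then have kK: "k < K"
    using Gt_subset by auto
  have "(\<lambda>i. \<Sum>s\<in>Sg k. F i s / T (\<phi> i)) \<longlonglongrightarrow> (\<Sum>s\<in>Sg k. f s)"
    using group_subset_strats[OF kK] by (intro tendsto_sum normalized_tendsto) auto
  moreover have "(\<Sum>s\<in>Sg k. F i s / T (\<phi> i)) = d (\<phi> i) k / T (\<phi> i)" for i
    using feasible_profiles[of i] kK unfolding feasible_def sum_divide_distrib[symmetric] by simp
  moreover have "(\<lambda>i. d (\<phi> i) k / T (\<phi> i)) \<longlonglongrightarrow> lam k"
    using LIMSEQ_subseq_LIMSEQ[OF shares_tendsto[OF kK] subseq] by (simp add: o_def)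
  ultimately have "(\<Sum>s\<in>Sg k. f s) = lam k"
    using LIMSEQ_unique by auto
  moreover have "(\<Sum>s\<in>Sg k. f s) = (\<Sum>s\<in>St k. f s)"
    using finite_group[OF kK] group_subset_strats[OF kK] nontight_limit_zero
    unfolding St_eq by (intro sum.mono_neutral_right) auto
  ultimately show "sum f (St k) = lam k"
    by simp
qed

end

locale scaling_equilibria = scaling +
  fixes fN fS
  assumes NE: "\<And>i. is_NE A {..<K} Sg r \<tau> (d i) (fN i)"
    and SO: "\<And>i. is_SO A {..<K} Sg r \<tau> (d i) (fS i)"
begin

lemma feasible_NE: "feasible {..<K} Sg (d i) (fN i)"
  using NE unfolding is_NE_def by blast

lemma feasible_SO: "feasible {..<K} Sg (d i) (fS i)"
  using SO unfolding is_SO_def by blast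

lemma SO_cost_le_NE_cost: "cost A S r \<tau> (fS i) \<le> cost A S r \<tau> (fN i)"
  using SO feasible_NE unfolding is_SO_def by blast

lemma normalized_group_cost_le_price:
  assumes k: "k < K" and s': "s' \<in> Sg k"
  shows "group_cost k (fN j) / (T j * g j) \<le> sprice A S r \<tau> (fN j) s' / g j"
proof -
  have "group_cost k (fN j) \<le> d j k * sprice A S r \<tau> (fN j) s'"
    using NE_group_cost_le[OF NE k s'] .
  also have "\<dots> \<le> T j * sprice A S r \<tau> (fN j) s'"
    using volume_nonneg sprice_nonneg[OF feasible_nonneg[OF feasible_NE]] group_subset_strats[OF k] s' k
    unfolding total_def by (intro mult_right_mono member_le_sum) auto
  finally have "group_cost k (fN j) / (T j * g j) \<le> T j * sprice A S r \<tau> (fN j) s' / (T j * g j)"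
    using total_pos[of j] scale_pos[of j] by (intro divide_right_mono) auto
  then show ?thesis
    using total_pos[of j] by simp
qed

end

locale NE_profile_limit = scaling_equilibria +
  fixes \<phi> :: "nat \<Rightarrow> nat" and f
  assumes NE_subseq: "strict_mono \<phi>"
    and NE_normalized_tendsto:
      "\<And>s. s \<in> strats {..<K} Sg \<Longrightarrow> (\<lambda>i. fN (\<phi> i) s / total K (d (\<phi> i))) \<longlonglongrightarrow> f s"

sublocale NE_profile_limit \<subseteq> profile_limit A K Sg r \<tau> d g lam l \<phi> "\<lambda>i. fN (\<phi> i)" f
  using NE_subseq feasible_NE NE_normalized_tendsto by unfold_locales auto

context NE_profile_limit
begin

text \<open>A group with a tight strategy pays at most its price, which converges; a group without
  one is negligible by scalability.\<close>

lemma NE_normalized_group_cost_bounded: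
  assumes k: "k < K"
  shows "\<exists>B. eventually (\<lambda>i. group_cost k (fN (\<phi> i)) / (T (\<phi> i) * g (\<phi> i)) \<le> B) sequentially"
proof (cases "\<exists>s\<in>Sg k. tight A S r l s")
  case True
  then obtain s' where s': "s' \<in> Sg k" "tight A S r l s'"
    by blast
  have "eventually (\<lambda>i. sprice A S r \<tau> (fN (\<phi> i)) s' / g (\<phi> i)
      < (\<Sum>a\<in>A. r a s' * lp a (load S r f a)) + 1) sequentially"
    using group_subset_strats[OF k] s' by (intro order_tendstoD(2)[OF scaled_sprice_tendsto]) auto
  then have "eventually (\<lambda>i. group_cost k (fN (\<phi> i)) / (T (\<phi> i) * g (\<phi> i))
      \<le> (\<Sum>a\<in>A. r a s' * lp a (load S r f a)) + 1) sequentially"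
    by (rule eventually_mono)
      (use normalized_group_cost_le_price[OF k s'(1)] in \<open>meson less_imp_le order_trans\<close>)
  then show ?thesis ..
next
  case False
  then have "(\<lambda>i. group_cost k (fN i) / (T i * g i)) \<longlonglongrightarrow> 0"
    using negligible_or_tight[OF k] feasible_NE by blast
  from order_tendstoD(2)[OF LIMSEQ_subseq_LIMSEQ[OF this NE_subseq] zero_less_one]
  have "eventually (\<lambda>i. group_cost k (fN (\<phi> i)) / (T (\<phi> i) * g (\<phi> i)) \<le> 1) sequentially"
    by (rule eventually_mono) simp
  then show ?thesis ..
qed

lemma NE_normalized_cost_bounded:
  "\<exists>B. eventually (\<lambda>i. cost A S r \<tau> (fN (\<phi> i)) / (T (\<phi> i) * g (\<phi> i)) \<le> B) sequentially"
proof -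
  have "\<forall>k\<in>{..<K}.
      \<exists>B. eventually (\<lambda>i. group_cost k (fN (\<phi> i)) / (T (\<phi> i) * g (\<phi> i)) \<le> B) sequentially"
    using NE_normalized_group_cost_bounded by blast
  from bchoice[OF this] obtain B where "\<forall>k\<in>{..<K}.
      eventually (\<lambda>i. group_cost k (fN (\<phi> i)) / (T (\<phi> i) * g (\<phi> i)) \<le> B k) sequentially"
    by blast
  then have "eventually (\<lambda>i. \<forall>k\<in>{..<K}. group_cost k (fN (\<phi> i)) / (T (\<phi> i) * g (\<phi> i)) \<le> B k)
      sequentially"
    by (rule eventually_ball_finite[OF finite_lessThan])
  then have "eventually (\<lambda>i. cost A S r \<tau> (fN (\<phi> i)) / (T (\<phi> i) * g (\<phi> i)) \<le> (\<Sum>k<K. B k))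
      sequentially"
    unfolding cost_eq_sum_groups sum_divide_distrib by (rule eventually_mono) (intro sum_mono, blast)
  then show ?thesis ..
qed

end

sublocale NE_profile_limit \<subseteq> bounded_profile_limit A K Sg r \<tau> d g lam l \<phi> "\<lambda>i. fN (\<phi> i)" f
  using NE_normalized_cost_bounded by unfold_locales

context NE_profile_limit
begin

text \<open>By the equilibrium inequality, a nontight strategy in a group with a tight strategy \<open>s'\<close>
  costs at most its weight times the price of \<open>s'\<close>, and its weight vanishes.\<close>

lemma normalized_weighted_price_tendsto:
  assumes k: "k < K" and s: "s \<in> Sg k" and s': "s' \<in> Sg k" "tight A S r l s'"
  shows "(\<lambda>i. fN (\<phi> i) s * sprice A S r \<tau> (fN (\<phi> i)) s / (T (\<phi> i) * g (\<phi> i)))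
    \<longlonglongrightarrow> (if tight A S r l s then f s * sprice At TS r lp f s else 0)"
proof -
  have sS: "s \<in> S" and s'S: "s' \<in> S"
    using group_subset_strats[OF k] s s'(1) by auto
  show ?thesis
  proof (cases "tight A S r l s")
    case True
    have "(\<lambda>i. fN (\<phi> i) s / T (\<phi> i) * (sprice A S r \<tau> (fN (\<phi> i)) s / g (\<phi> i)))
        \<longlonglongrightarrow> f s * (\<Sum>a\<in>A. r a s * lp a (load S r f a))"
      by (intro tendsto_mult normalized_tendsto[OF sS] scaled_sprice_tendsto[OF sS True])
    then show ?thesis
      using limit_sprice_eq[OF sS True] True by (simp add: times_divide_times_eq)
  next
    case False
    have "(\<lambda>i. fN (\<phi> i) s / T (\<phi> i) * (sprice A S r \<tau> (fN (\<phi> i)) s' / g (\<phi> i)))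
        \<longlonglongrightarrow> f s * (\<Sum>a\<in>A. r a s' * lp a (load S r f a))"
      by (intro tendsto_mult normalized_tendsto[OF sS] scaled_sprice_tendsto[OF s'S s'(2)])
    then have upper: "(\<lambda>i. fN (\<phi> i) s * sprice A S r \<tau> (fN (\<phi> i)) s' / (T (\<phi> i) * g (\<phi> i)))
        \<longlonglongrightarrow> 0"
      using nontight_limit_zero[OF sS False] by (simp add: times_divide_times_eq)
    have "fN j s * sprice A S r \<tau> (fN j) s / (T j * g j)
        \<le> fN j s * sprice A S r \<tau> (fN j) s' / (T j * g j)" for j
      using NE_weighted_price_le[OF NE k s s'(1), of j] total_pos[of j] scale_pos[of j]
      by (intro divide_right_mono) auto
    moreover have "0 \<le> fN j s * sprice A S r \<tau> (fN j) s / (T j * g j)" for j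
      using feasible_nonneg[OF feasible_NE] sprice_nonneg[OF feasible_nonneg[OF feasible_NE] sS]
        total_pos[of j] scale_pos[of j] sS
      by (intro divide_nonneg_pos mult_nonneg_nonneg) auto
    ultimately have "(\<lambda>i. fN (\<phi> i) s * sprice A S r \<tau> (fN (\<phi> i)) s / (T (\<phi> i) * g (\<phi> i)))
        \<longlonglongrightarrow> 0"
      by (intro tendsto_sandwich[OF always_eventually always_eventually tendsto_const upper]) auto
    with False show ?thesis
      by simp
  qed
qed

lemma normalized_group_cost_tendsto:
  assumes k: "k < K"
  shows "(\<lambda>i. group_cost k (fN (\<phi> i)) / (T (\<phi> i) * g (\<phi> i)))
    \<longlonglongrightarrow> (\<Sum>s\<in>St k. f s * sprice At TS r lp f s)"
proof (cases "\<exists>s\<in>Sg k. tight A S r l s")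
  case True
  then obtain s' where s': "s' \<in> Sg k" "tight A S r l s'"
    by blast
  have "(\<lambda>i. group_cost k (fN (\<phi> i)) / (T (\<phi> i) * g (\<phi> i)))
      \<longlonglongrightarrow> (\<Sum>s\<in>Sg k. if tight A S r l s then f s * sprice At TS r lp f s else 0)"
    unfolding sum_divide_distrib
    by (intro tendsto_sum normalized_weighted_price_tendsto[OF k _ s'])
  then show ?thesis
    unfolding St_eq sum.inter_filter[OF finite_group[OF k]] .
next
  case False
  then have "(\<lambda>i. group_cost k (fN i) / (T i * g i)) \<longlonglongrightarrow> 0"
    using negligible_or_tight[OF k] feasible_NE by blast
  from LIMSEQ_subseq_LIMSEQ[OF this NE_subseq]
  have "(\<lambda>i. group_cost k (fN (\<phi> i)) / (T (\<phi> i) * g (\<phi> i))) \<longlonglongrightarrow> 0"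
    by (simp add: o_def)
  moreover have "St k = {}"
    using False unfolding St_eq by blast
  ultimately show ?thesis
    by simp
qed

lemma NE_normalized_cost_tendsto:
  "(\<lambda>i. cost A S r \<tau> (fN (\<phi> i)) / (T (\<phi> i) * g (\<phi> i))) \<longlonglongrightarrow> cost At TS r lp f"
proof -
  have "(\<lambda>i. cost A S r \<tau> (fN (\<phi> i)) / (T (\<phi> i) * g (\<phi> i)))
      \<longlonglongrightarrow> (\<Sum>k<K. \<Sum>s\<in>St k. f s * sprice At TS r lp f s)"
    unfolding cost_eq_sum_groups sum_divide_distrib[where A = "{..<K}"]
    by (intro tendsto_sum normalized_group_cost_tendsto) simp
  also have "(\<Sum>k<K. \<Sum>s\<in>St k. f s * sprice At TS r lp f s)
      = (\<Sum>k\<in>Gt. \<Sum>s\<in>St k. f s * sprice At TS r lp f s)"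
    using Gt_subset by (intro sum.mono_neutral_right) (simp_all add: tight_groups_def)
  also have "\<dots> = cost At TS r lp f"
    unfolding cost_eq_sum_sprice sum_TS ..
  finally show ?thesis .
qed

lemma limit_is_NE: "is_NE At Gt St r lp lam f"
  unfolding is_NE_def
proof (intro conjI ballI impI limit_feasible)
  fix k s s' assume k: "k \<in> Gt" and s: "s \<in> St k" and s': "s' \<in> St k" and pos: "0 < f s"
  have kK: "k < K"
    using k Gt_subset by auto
  have sk: "s \<in> Sg k" "s' \<in> Sg k" and tight: "tight A S r l s" "tight A S r l s'"
    using s s' unfolding St_eq by auto
  have sS: "s \<in> S" and s'S: "s' \<in> S"
    using sk group_subset_strats[OF kK] by auto
  have "eventually (\<lambda>i. 0 < fN (\<phi> i) s / T (\<phi> i)) sequentially"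
    using order_tendstoD(1)[OF normalized_tendsto[OF sS] pos] by simp
  then have "eventually (\<lambda>i. sprice A S r \<tau> (fN (\<phi> i)) s / g (\<phi> i)
      \<le> sprice A S r \<tau> (fN (\<phi> i)) s' / g (\<phi> i)) sequentially"
  proof (rule eventually_mono)
    fix i assume "0 < fN (\<phi> i) s / T (\<phi> i)"
    then have "0 < fN (\<phi> i) s"
      using total_pos[of "\<phi> i"] by (simp add: zero_less_divide_iff)
    then have "sprice A S r \<tau> (fN (\<phi> i)) s \<le> sprice A S r \<tau> (fN (\<phi> i)) s'"
      using NE[of "\<phi> i"] kK sk unfolding is_NE_def by blast
    then show "sprice A S r \<tau> (fN (\<phi> i)) s / g (\<phi> i) \<le> sprice A S r \<tau> (fN (\<phi> i)) s' / g (\<phi> i)"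
      using scale_pos[of "\<phi> i"] by (simp add: divide_right_mono)
  qed
  from tendsto_le[OF trivial_limit_sequentially scaled_sprice_tendsto[OF s'S tight(2)]
      scaled_sprice_tendsto[OF sS tight(1)] this]
  show "sprice At TS r lp f s \<le> sprice At TS r lp f s'"
    unfolding limit_sprice_eq[OF sS tight(1)] limit_sprice_eq[OF s'S tight(2)] .
qed

text \<open>Along a further subsequence the normalized social optima converge to a feasible profile of
  the limit game; lower semicontinuity bounds their cost below by the optimum of the limit game,
  which equals the limit equilibrium cost by (S4), while they never cost more than the
  equilibria.\<close>

lemma SO_normalized_cost_tendsto:
  obtains \<psi> where "strict_mono \<psi>"
    "(\<lambda>i. cost A S r \<tau> (fS (\<phi> (\<psi> i))) / (T (\<phi> (\<psi> i)) * g (\<phi> (\<psi> i)))) \<longlonglongrightarrow> cost At TS r lp f"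
proof -
  obtain \<psi> h where \<psi>: "strict_mono \<psi>"
    and h: "\<And>s. s \<in> S \<Longrightarrow> (\<lambda>i. fS (\<phi> (\<psi> i)) s / T (\<phi> (\<psi> i))) \<longlonglongrightarrow> h s"
    using normalized_profiles_convergent_subseq[of \<phi> "\<lambda>i. fS (\<phi> i)"] feasible_SO by blast
  define L where "L = cost At TS r lp f"
  have NE_lim: "(\<lambda>i. cost A S r \<tau> (fN (\<phi> (\<psi> i))) / (T (\<phi> (\<psi> i)) * g (\<phi> (\<psi> i)))) \<longlonglongrightarrow> L"
    using LIMSEQ_subseq_LIMSEQ[OF NE_normalized_cost_tendsto \<psi>] unfolding L_def by (simp add: o_def)
  have SO_le_NE: "cost A S r \<tau> (fS j) / (T j * g j) \<le> cost A S r \<tau> (fN j) / (T j * g j)" for j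
    using SO_cost_le_NE_cost total_pos[of j] scale_pos[of j] by (intro divide_right_mono) auto
  have "eventually (\<lambda>i. cost A S r \<tau> (fS (\<phi> (\<psi> i))) / (T (\<phi> (\<psi> i)) * g (\<phi> (\<psi> i))) \<le> L + 1)
      sequentially"
    using order_tendstoD(2)[OF NE_lim less_add_one]
    by (rule eventually_mono) (meson SO_le_NE less_imp_le order_trans)
  then interpret opt: bounded_profile_limit A K Sg r \<tau> d g lam l "\<lambda>i. \<phi> (\<psi> i)" "\<lambda>i. fS (\<phi> (\<psi> i))" h
    using strict_mono_o[OF NE_subseq \<psi>] feasible_SO h by unfold_locales (auto simp: o_def)
  obtain hs where hs: "is_SO At Gt St r lp lam hs"
    using limit_SO_exists[OF limit_feasible] .
  have L_le: "L \<le> cost At TS r lp h"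
    using limit_NE_cost_eq_SO_cost[OF limit_is_NE hs] hs opt.limit_feasible
    unfolding L_def is_SO_def by simp
  have "(\<lambda>i. cost A S r \<tau> (fS (\<phi> (\<psi> i))) / (T (\<phi> (\<psi> i)) * g (\<phi> (\<psi> i)))) \<longlonglongrightarrow> L"
  proof (rule order_tendstoI)
    fix b assume "b < L"
    then show "eventually (\<lambda>i. b < cost A S r \<tau> (fS (\<phi> (\<psi> i))) / (T (\<phi> (\<psi> i)) * g (\<phi> (\<psi> i))))
        sequentially"
      using L_le by (intro opt.limit_cost_less_normalized_cost) simp
  next
    fix b assume "L < b"
    from order_tendstoD(2)[OF NE_lim this]
    show "eventually (\<lambda>i. cost A S r \<tau> (fS (\<phi> (\<psi> i))) / (T (\<phi> (\<psi> i)) * g (\<phi> (\<psi> i))) < b)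
        sequentially"
      by (rule eventually_mono) (meson SO_le_NE le_less_trans)
  qed
  with \<psi> show ?thesis
    unfolding L_def by (rule that)
qed

end

context scaling_equilibria
begin

lemma PoA_subseq_tendsto_1:
  obtains \<psi> where "strict_mono \<psi>" "(\<lambda>i. cost A S r \<tau> (fN (\<psi> i)) / cost A S r \<tau> (fS (\<psi> i))) \<longlonglongrightarrow> 1"
proof -
  obtain \<phi> f where "strict_mono \<phi>" "\<And>s. s \<in> S \<Longrightarrow> (\<lambda>i. fN (\<phi> i) s / T (\<phi> i)) \<longlonglongrightarrow> f s"
    using normalized_profiles_convergent_subseq[of "\<lambda>i. i" fN] feasible_NE by blast
  then interpret NE_profile_limit A K Sg r \<tau> d g lam l fN fS \<phi> f
    by unfold_locales
  obtain \<psi> where \<psi>: "strict_mono \<psi>" and SO_lim: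
    "(\<lambda>i. cost A S r \<tau> (fS (\<phi> (\<psi> i))) / (T (\<phi> (\<psi> i)) * g (\<phi> (\<psi> i)))) \<longlonglongrightarrow> cost At TS r lp f"
    using SO_normalized_cost_tendsto .
  have NE_lim: "(\<lambda>i. cost A S r \<tau> (fN (\<phi> (\<psi> i))) / (T (\<phi> (\<psi> i)) * g (\<phi> (\<psi> i))))
      \<longlonglongrightarrow> cost At TS r lp f"
    using LIMSEQ_subseq_LIMSEQ[OF NE_normalized_cost_tendsto \<psi>] by (simp add: o_def)
  have pos: "0 < cost At TS r lp f"
    using limit_NE_cost_pos[OF limit_is_NE] .
  have "(x / c) / (y / c) = x / y" if "c \<noteq> 0" for x y c :: real
    using that by (cases "y = 0") simp_all
  then have "(\<lambda>i. cost A S r \<tau> (fN (\<phi> (\<psi> i))) / cost A S r \<tau> (fS (\<phi> (\<psi> i))))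
      \<longlonglongrightarrow> cost At TS r lp f / cost At TS r lp f"
    using tendsto_divide[OF NE_lim SO_lim] pos total_pos scale_pos
    by (simp add: less_imp_neq[symmetric])
  then show ?thesis
    using that[OF strict_mono_o[OF NE_subseq \<psi>]] pos by (simp add: o_def)
qed

end

lemma scalable_obtains_scaling:
  assumes ncg: "ncg A K Sg r \<tau>" and D: "D \<subseteq> {d. \<forall>k<K. 0 \<le> d k}"
    and scalable: "scalable A K Sg r \<tau> D"
    and dn: "\<forall>n. dn n \<in> D" and total: "filterlim (\<lambda>n. total K (dn n)) at_top sequentially"
    and total_pos: "\<And>n. 0 < total K (dn n)"
  obtains ns g lam l where "strict_mono ns" "scaling A K Sg r \<tau> (\<lambda>i. dn (ns i)) g lam l"
proof -
  from scalable[unfolded scalable_def Let_def, rule_format, OF conjI[OF dn total]]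
  obtain ns g lam l where ns: "strict_mono ns" and "\<forall>i. 0 < g i"
    and "\<forall>k<K. (\<lambda>i. dn (ns i) k / total K (dn (ns i))) \<longlonglongrightarrow> lam k"
    and "\<forall>a\<in>A. limit_price_fun (Ires (strats {..<K} Sg) r a) (l a)"
    and "\<forall>a\<in>A. \<forall>x\<in>Ires (strats {..<K} Sg) r a.
      (\<lambda>i. ereal (\<tau> a (total K (dn (ns i)) * x) / g i)) \<longlonglongrightarrow> l a x"
    and "\<forall>k<K. (\<forall>F. (\<forall>i. feasible {..<K} Sg (dn (ns i)) (F i)) \<longrightarrow>
      (\<lambda>i. (\<Sum>s\<in>Sg k. F i s * sprice A (strats {..<K} Sg) r \<tau> (F i) s) / (total K (dn (ns i)) * g i))
        \<longlonglongrightarrow> 0) \<or> (\<exists>s\<in>Sg k. tight A (strats {..<K} Sg) r l s)"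
    and "\<forall>f h. is_NE (tight_res A (strats {..<K} Sg) r l) (tight_groups A (strats {..<K} Sg) r l Sg K)
        (tight_strats A (strats {..<K} Sg) r l Sg) r (\<lambda>a x. real_of_ereal (l a x)) lam f \<and>
      is_SO (tight_res A (strats {..<K} Sg) r l) (tight_groups A (strats {..<K} Sg) r l Sg K)
        (tight_strats A (strats {..<K} Sg) r l Sg) r (\<lambda>a x. real_of_ereal (l a x)) lam h \<longrightarrow>
      cost (tight_res A (strats {..<K} Sg) r l)
        (strats (tight_groups A (strats {..<K} Sg) r l Sg K) (tight_strats A (strats {..<K} Sg) r l Sg))
        r (\<lambda>a x. real_of_ereal (l a x)) f =
      cost (tight_res A (strats {..<K} Sg) r l)
        (strats (tight_groups A (strats {..<K} Sg) r l Sg K) (tight_strats A (strats {..<K} Sg) r l Sg))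
        r (\<lambda>a x. real_of_ereal (l a x)) h"
    and "\<forall>f. is_NE (tight_res A (strats {..<K} Sg) r l) (tight_groups A (strats {..<K} Sg) r l Sg K)
        (tight_strats A (strats {..<K} Sg) r l Sg) r (\<lambda>a x. real_of_ereal (l a x)) lam f \<longrightarrow>
      0 < cost (tight_res A (strats {..<K} Sg) r l)
        (strats (tight_groups A (strats {..<K} Sg) r l Sg K) (tight_strats A (strats {..<K} Sg) r l Sg))
        r (\<lambda>a x. real_of_ereal (l a x)) f"
    by blast
  moreover have "\<And>n k. k < K \<Longrightarrow> 0 \<le> dn n k"
    using dn D by auto
  ultimately have "scaling A K Sg r \<tau> (\<lambda>i. dn (ns i)) g lam l"
    using total_pos by unfold_locales (use ncg in blast)+
  with ns show ?thesis
    by (rule that)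
qed

lemma scalable_obtains_scaling_equilibria:
  assumes ncg: "ncg A K Sg r \<tau>" and D: "D \<subseteq> {d. \<forall>k<K. 0 \<le> d k}"
    and scalable: "scalable A K Sg r \<tau> D"
    and dn: "\<forall>n. dn n \<in> D" and total: "filterlim (\<lambda>n. total K (dn n)) at_top sequentially"
    and NE: "\<forall>n. is_NE A {..<K} Sg r \<tau> (dn n) (fN n)"
    and SO: "\<forall>n. is_SO A {..<K} Sg r \<tau> (dn n) (fS n)"
  obtains \<rho> g lam l where "strict_mono \<rho>"
    "scaling_equilibria A K Sg r \<tau> (\<lambda>i. dn (\<rho> i)) g lam l (\<lambda>i. fN (\<rho> i)) (\<lambda>i. fS (\<rho> i))"
proof -
  obtain N where N: "\<And>n. N \<le> n \<Longrightarrow> 1 \<le> total K (dn n)"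
    using total unfolding filterlim_at_top eventually_sequentially by blast
  have shift: "strict_mono (\<lambda>n. n + N)"
    by (simp add: strict_mono_def)
  have "\<forall>n. dn (n + N) \<in> D" "filterlim (\<lambda>n. total K (dn (n + N))) at_top sequentially"
    "\<And>n. 0 < total K (dn (n + N))"
    using dn filterlim_compose[OF total filterlim_subseq[OF shift]] N[OF le_add2]
    by (simp_all add: o_def less_le_trans[OF zero_less_one])
  then obtain ns g lam l where ns: "strict_mono ns"
    and "scaling A K Sg r \<tau> (\<lambda>i. dn (ns i + N)) g lam l"
    by (rule scalable_obtains_scaling[OF ncg D scalable])
  moreover have "scaling_equilibria_axioms A K Sg r \<tau> (\<lambda>i. dn (ns i + N))
      (\<lambda>i. fN (ns i + N)) (\<lambda>i. fS (ns i + N))"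
    using NE SO unfolding scaling_equilibria_axioms_def by blast
  ultimately show ?thesis
    using that[of "\<lambda>i. ns i + N"] strict_mono_o[OF shift ns]
    by (simp add: o_def scaling_equilibria_def)
qed

theorem theorem2:
  fixes A :: "'a set" and K :: nat and Sg :: "nat \<Rightarrow> 's set"
    and r :: "'a \<Rightarrow> 's \<Rightarrow> real" and \<tau> :: "'a \<Rightarrow> real \<Rightarrow> real"
    and D :: "(nat \<Rightarrow> real) set"
  assumes "ncg A K Sg r \<tau>"
    and "D \<subseteq> {d. \<forall>k<K. 0 \<le> d k}"
    and "scalable A K Sg r \<tau> D"
  shows "awdg A K Sg r \<tau> D"
  unfolding awdg_def
proof (intro allI impI, elim conjE)
  fix dn :: "nat \<Rightarrow> nat \<Rightarrow> real" and fN fS :: "nat \<Rightarrow> 's \<Rightarrow> real"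
  assume dn: "\<forall>n. dn n \<in> D" and total: "filterlim (\<lambda>n. total K (dn n)) at_top sequentially"
    and NE: "\<forall>n. is_NE A {..<K} Sg r \<tau> (dn n) (fN n)" and SO: "\<forall>n. is_SO A {..<K} Sg r \<tau> (dn n) (fS n)"
  show "(\<lambda>n. cost A (strats {..<K} Sg) r \<tau> (fN n) / cost A (strats {..<K} Sg) r \<tau> (fS n)) \<longlonglongrightarrow> 1"
  proof (rule LIMSEQ_subsubseq)
    fix \<psi> :: "nat \<Rightarrow> nat"
    assume \<psi>: "strict_mono \<psi>"
    have total_\<psi>: "filterlim (\<lambda>n. total K (dn (\<psi> n))) at_top sequentially"
      using filterlim_compose[OF total filterlim_subseq[OF \<psi>]] by (simp add: o_def)
    have "\<forall>n. dn (\<psi> n) \<in> D" "\<forall>n. is_NE A {..<K} Sg r \<tau> (dn (\<psi> n)) (fN (\<psi> n))"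
      "\<forall>n. is_SO A {..<K} Sg r \<tau> (dn (\<psi> n)) (fS (\<psi> n))"
      using dn NE SO by blast+
    from scalable_obtains_scaling_equilibria[OF assms this(1) total_\<psi> this(2,3)]
    obtain \<rho> g lam l where \<rho>: "strict_mono \<rho>" and equilibria: "scaling_equilibria A K Sg r \<tau>
        (\<lambda>i. dn (\<psi> (\<rho> i))) g lam l (\<lambda>i. fN (\<psi> (\<rho> i))) (\<lambda>i. fS (\<psi> (\<rho> i)))" .
    obtain \<psi>' where \<psi>': "strict_mono \<psi>'" and "(\<lambda>i. cost A (strats {..<K} Sg) r \<tau> (fN (\<psi> (\<rho> (\<psi>' i))))
        / cost A (strats {..<K} Sg) r \<tau> (fS (\<psi> (\<rho> (\<psi>' i))))) \<longlonglongrightarrow> 1"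
      by (rule scaling_equilibria.PoA_subseq_tendsto_1[OF equilibria])
    then show "\<exists>\<psi>'. strict_mono \<psi>' \<and> ((\<lambda>n. cost A (strats {..<K} Sg) r \<tau> (fN n)
        / cost A (strats {..<K} Sg) r \<tau> (fS n)) \<circ> \<psi> \<circ> \<psi>') \<longlonglongrightarrow> 1"
      by (intro exI[of _ "\<rho> \<circ> \<psi>'"] conjI strict_mono_o[OF \<rho> \<psi>']) (simp add: o_def)
  qed
qed

end
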